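(* Let $E_0,E_1,E_2\in\mathcal G$ be mutually distant, and let $W\in\mathcal G$ be adjacent to $E_0$ and not distant from $E_1$ nor from $E_2$. For $i\in\{1,2\}$ let $p_i:=E_i\cap W$, which is a point. Then the line $L=p_1+p_2$ meets $E_0$; that is, $L$ is the unique line through $p_1$ meeting $E_0$ and $E_2$.
   Context: $K$ is a (not necessarily commutative) field and $V$ is a left vector space over $K$ of arbitrary (possibly infinite) dimension with $\dim V>2$. $\mathcal G:=\{X\le V\mid X\cong V/X\}$, assumed nonempty. Points are $1$-dimensional and lines $2$-dimensional subspaces; two subspaces meet if they have a common point. $X,Y\in\mathcal G$ are adjacent if $\dim((X+Y)/X)=\dim((X+Y)/Y)=1$, and distant if $V=X\oplus Y$. *)

theory Defs
  imports Main
begin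

definition lvs :: "('k::division_ring \<Rightarrow> 'v::ab_group_add \<Rightarrow> 'v) \<Rightarrow> bool" where
  "lvs sm \<longleftrightarrow> (\<forall>a b x. sm (a + b) x = sm a x + sm b x)
             \<and> (\<forall>a x y. sm a (x + y) = sm a x + sm a y)
             \<and> (\<forall>a b x. sm (a * b) x = sm a (sm b x))
             \<and> (\<forall>x. sm 1 x = x)"

definition lsubspace :: "('k::division_ring \<Rightarrow> 'v::ab_group_add \<Rightarrow> 'v) \<Rightarrow> 'v set \<Rightarrow> bool" where
  "lsubspace sm X \<longleftrightarrow> 0 \<in> X \<and> (\<forall>x\<in>X. \<forall>y\<in>X. x + y \<in> X) \<and> (\<forall>a. \<forall>x\<in>X. sm a x \<in> X)"

definition span1 :: "('k::division_ring \<Rightarrow> 'v::ab_group_add \<Rightarrow> 'v) \<Rightarrow> 'v \<Rightarrow> 'v set" where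
  "span1 sm v = range (\<lambda>a. sm a v)"

definition sumset :: "'v::ab_group_add set \<Rightarrow> 'v set \<Rightarrow> 'v set" where
  "sumset X Y = {x + y | x y. x \<in> X \<and> y \<in> Y}"

definition is_point :: "('k::division_ring \<Rightarrow> 'v::ab_group_add \<Rightarrow> 'v) \<Rightarrow> 'v set \<Rightarrow> bool" where
  "is_point sm P \<longleftrightarrow> (\<exists>v. v \<noteq> 0 \<and> P = span1 sm v)"

definition is_line :: "('k::division_ring \<Rightarrow> 'v::ab_group_add \<Rightarrow> 'v) \<Rightarrow> 'v set \<Rightarrow> bool" where
  "is_line sm L \<longleftrightarrow> (\<exists>u v. u \<noteq> 0 \<and> v \<notin> span1 sm u \<and> L = sumset (span1 sm u) (span1 sm v))"

definition meets :: "('k::division_ring \<Rightarrow> 'v::ab_group_add \<Rightarrow> 'v) \<Rightarrow> 'v set \<Rightarrow> 'v set \<Rightarrow> bool" where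
  "meets sm X Y \<longleftrightarrow> (\<exists>P. is_point sm P \<and> P \<subseteq> X \<and> P \<subseteq> Y)"

definition dim_gt2 :: "('k::division_ring \<Rightarrow> 'v::ab_group_add \<Rightarrow> 'v) \<Rightarrow> bool" where
  "dim_gt2 sm \<longleftrightarrow> (\<exists>u v w. u \<noteq> 0 \<and> v \<notin> span1 sm u \<and> w \<notin> sumset (span1 sm u) (span1 sm v))"

definition quot_dim1 :: "('k::division_ring \<Rightarrow> 'v::ab_group_add \<Rightarrow> 'v) \<Rightarrow> 'v set \<Rightarrow> 'v set \<Rightarrow> bool" where
  "quot_dim1 sm A B \<longleftrightarrow> B \<subseteq> A \<and> (\<exists>v\<in>A. v \<notin> B \<and> A = sumset B (span1 sm v))"

definition adjacent :: "('k::division_ring \<Rightarrow> 'v::ab_group_add \<Rightarrow> 'v) \<Rightarrow> 'v set \<Rightarrow> 'v set \<Rightarrow> bool" where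
  "adjacent sm X Y \<longleftrightarrow> quot_dim1 sm (sumset X Y) X \<and> quot_dim1 sm (sumset X Y) Y"

definition distant :: "'v::ab_group_add set \<Rightarrow> 'v set \<Rightarrow> bool" where
  "distant X Y \<longleftrightarrow> X \<inter> Y = {0} \<and> sumset X Y = UNIV"

definition coset :: "'v::ab_group_add \<Rightarrow> 'v set \<Rightarrow> 'v set" where
  "coset v X = (\<lambda>x. v + x) ` X"

text \<open>X is isomorphic (as a left vector space) to the quotient space V/X, whose elements are
  the cosets v + X with the induced operations.\<close>
definition iso_quot :: "('k::division_ring \<Rightarrow> 'v::ab_group_add \<Rightarrow> 'v) \<Rightarrow> 'v set \<Rightarrow> bool" where
  "iso_quot sm X \<longleftrightarrow> (\<exists>f. bij_betw f X (range (\<lambda>v. coset v X)) \<and>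
      (\<forall>x\<in>X. \<forall>y\<in>X. \<forall>a u w. f x = coset u X \<longrightarrow> f y = coset w X \<longrightarrow>
          f (x + y) = coset (u + w) X \<and> f (sm a x) = coset (sm a u) X))"

definition inG :: "('k::division_ring \<Rightarrow> 'v::ab_group_add \<Rightarrow> 'v) \<Rightarrow> 'v set \<Rightarrow> bool" where
  "inG sm X \<longleftrightarrow> lsubspace sm X \<and> iso_quot sm X"

end

theory Submission
  imports Defs
begin

text \<open>Adjacency of \<open>W\<close> and \<open>E\<^sub>0\<close> gives a vector \<open>w \<in> W - E\<^sub>0\<close> with
  \<open>W \<subseteq> E\<^sub>0 + \<langle>w\<rangle>\<close>, and \<open>E\<^sub>0 \<subseteq> W + \<langle>f\<rangle>\<close> for every \<open>f \<in> E\<^sub>0 - W\<close>.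
  If \<open>E\<close> is a complement of \<open>E\<^sub>0\<close> not distant from \<open>W\<close>, the second fact forces
  \<open>E \<inter> W \<noteq> 0\<close>, and the first then shows that \<open>E \<inter> W\<close> is the point spanned by the unique
  \<open>e \<in> E\<close> with \<open>e \<equiv> w\<close> modulo \<open>E\<^sub>0\<close>. Hence \<open>p\<^sub>i = \<langle>e\<^sub>i\<rangle>\<close> with
  \<open>e\<^sub>1 - e\<^sub>2 \<in> E\<^sub>0\<close>, so \<open>p\<^sub>1 + p\<^sub>2\<close> meets \<open>E\<^sub>0\<close>. Conversely, a line through
  \<open>e\<^sub>1\<close>, \<open>x\<^sub>0 \<in> E\<^sub>0\<close> and \<open>x\<^sub>2 \<in> E\<^sub>2\<close> satisfies \<open>x\<^sub>2 = a e\<^sub>1 + b x\<^sub>0\<close> with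
  \<open>a \<noteq> 0\<close>, and \<open>a e\<^sub>2 - x\<^sub>2 \<in> E\<^sub>0 \<inter> E\<^sub>2 = 0\<close> puts \<open>e\<^sub>2\<close> on that line.\<close>

locale left_vector_space =
  fixes sm :: "'k::division_ring \<Rightarrow> 'v::ab_group_add \<Rightarrow> 'v"
  assumes lvs: "lvs sm"
begin

lemma smult_add_left: "sm (a + b) x = sm a x + sm b x"
  using lvs unfolding lvs_def by blast

lemma smult_add_right: "sm a (x + y) = sm a x + sm a y"
  using lvs unfolding lvs_def by blast

lemma smult_assoc: "sm (a * b) x = sm a (sm b x)"
  using lvs unfolding lvs_def by blast

lemma smult_one [simp]: "sm 1 x = x"
  using lvs unfolding lvs_def by blast

lemma smult_zero_left [simp]: "sm 0 x = 0"
  using smult_add_left[of 0 0 x] by simp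

lemma smult_zero_right [simp]: "sm a 0 = 0"
  using smult_add_right[of a 0 0] by simp

lemma smult_minus_left: "sm (- a) x = - sm a x"
  using smult_add_left[of "- a" a x] by (simp add: eq_neg_iff_add_eq_0)

lemma smult_minus_right: "sm a (- x) = - sm a x"
  using smult_add_right[of a "- x" x] by (simp add: eq_neg_iff_add_eq_0)

lemma smult_diff_right: "sm a (x - y) = sm a x - sm a y"
  using smult_add_right[of a x "- y"] by (simp add: smult_minus_right)

lemma smult_inverse_cancel [simp]: "a \<noteq> 0 \<Longrightarrow> sm (inverse a) (sm a x) = x"
  by (metis smult_assoc smult_one left_inverse)

lemma lsubspace_zero: "lsubspace sm X \<Longrightarrow> 0 \<in> X"
  unfolding lsubspace_def by blast

lemma lsubspace_add: "lsubspace sm X \<Longrightarrow> x \<in> X \<Longrightarrow> y \<in> X \<Longrightarrow> x + y \<in> X"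
  unfolding lsubspace_def by blast

lemma lsubspace_smult: "lsubspace sm X \<Longrightarrow> x \<in> X \<Longrightarrow> sm a x \<in> X"
  unfolding lsubspace_def by blast

lemma lsubspace_minus: "lsubspace sm X \<Longrightarrow> x \<in> X \<Longrightarrow> - x \<in> X"
  by (metis lsubspace_smult smult_minus_left smult_one)

lemma lsubspace_diff: "lsubspace sm X \<Longrightarrow> x \<in> X \<Longrightarrow> y \<in> X \<Longrightarrow> x - y \<in> X"
  by (metis diff_conv_add_uminus lsubspace_add lsubspace_minus)

lemma lsubspace_smult_cancel:
  "lsubspace sm X \<Longrightarrow> a \<noteq> 0 \<Longrightarrow> sm a x \<in> X \<Longrightarrow> x \<in> X"
  by (metis lsubspace_smult smult_inverse_cancel)

lemma mem_span1_iff: "x \<in> span1 sm v \<longleftrightarrow> (\<exists>a. x = sm a v)"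
  unfolding span1_def by auto

lemma mem_span1_self [simp]: "v \<in> span1 sm v"
  by (metis mem_span1_iff smult_one)

lemma mem_sumset_iff: "x \<in> sumset X Y \<longleftrightarrow> (\<exists>a b. a \<in> X \<and> b \<in> Y \<and> x = a + b)"
  unfolding sumset_def by auto

lemma mem_sumsetI: "a \<in> X \<Longrightarrow> b \<in> Y \<Longrightarrow> a + b \<in> sumset X Y"
  unfolding sumset_def by blast

lemma mem_sumsetE:
  assumes "x \<in> sumset X Y"
  obtains a b where "a \<in> X" "b \<in> Y" "x = a + b"
  using assms unfolding sumset_def by blast

lemma mem_sumset_span1_iff:
  "x \<in> sumset (span1 sm u) (span1 sm v) \<longleftrightarrow> (\<exists>a b. x = sm a u + sm b v)"
  unfolding sumset_def span1_def by blast

lemma sumset_commute: "sumset X Y = sumset Y X"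
  unfolding sumset_def by (auto; metis add.commute)

lemma lsubspace_span1: "lsubspace sm (span1 sm v)"
proof -
  have "sm a v + sm b v = sm (a + b) v" "sm c (sm a v) = sm (c * a) v" "0 = sm 0 v" for a b c
    by (simp_all add: smult_add_left smult_assoc)
  then show ?thesis unfolding lsubspace_def span1_def by blast
qed

lemma lsubspace_sumset:
  assumes X: "lsubspace sm X" and Y: "lsubspace sm Y"
  shows "lsubspace sm (sumset X Y)"
proof -
  have "0 \<in> sumset X Y"
    using mem_sumsetI[OF lsubspace_zero[OF X] lsubspace_zero[OF Y]] by simp
  moreover have "x + y \<in> sumset X Y" if x: "x \<in> sumset X Y" and y: "y \<in> sumset X Y" for x y
  proof -
    obtain a b where "a \<in> X" "b \<in> Y" "x = a + b" using x by (rule mem_sumsetE)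
    moreover obtain c d where "c \<in> X" "d \<in> Y" "y = c + d" using y by (rule mem_sumsetE)
    ultimately have "x + y = (a + c) + (b + d)" "a + c \<in> X" "b + d \<in> Y"
      using lsubspace_add X Y by (simp_all add: algebra_simps)
    then show ?thesis using mem_sumsetI by simp
  qed
  moreover have "sm k x \<in> sumset X Y" if x: "x \<in> sumset X Y" for k x
  proof -
    obtain a b where "a \<in> X" "b \<in> Y" "x = a + b"
      using x by (rule mem_sumsetE)
    then show ?thesis
      using mem_sumsetI[OF lsubspace_smult[OF X] lsubspace_smult[OF Y]] by (simp add: smult_add_right)
  qed
  ultimately show ?thesis unfolding lsubspace_def by blast
qed

lemma lsubspace_line: "lsubspace sm (sumset (span1 sm u) (span1 sm v))"
  by (simp add: lsubspace_span1 lsubspace_sumset)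

lemma mem_sumset_span1_left [simp]: "u \<in> sumset (span1 sm u) (span1 sm v)"
  by (metis mem_sumset_span1_iff add_0 smult_one smult_zero_left add.commute)

lemma mem_sumset_span1_right [simp]: "v \<in> sumset (span1 sm u) (span1 sm v)"
  by (metis mem_sumset_span1_iff add_0 smult_one smult_zero_left)

lemma span1_least: "lsubspace sm L \<Longrightarrow> v \<in> L \<Longrightarrow> span1 sm v \<subseteq> L"
  unfolding span1_def by (auto intro: lsubspace_smult)

lemma span1_eq_of_mem:
  assumes "x \<in> span1 sm u" "x \<noteq> 0"
  shows "span1 sm x = span1 sm u"
proof -
  obtain a where a: "x = sm a u" using assms(1) mem_span1_iff by blast
  then have "a \<noteq> 0" using assms(2) by auto
  then have "u \<in> span1 sm x" using a mem_span1_iff smult_inverse_cancel by metis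
  then show ?thesis
    using assms(1) by (intro subset_antisym span1_least lsubspace_span1)
qed

lemma meets_iff:
  assumes "lsubspace sm X" "lsubspace sm Y"
  shows "meets sm X Y \<longleftrightarrow> (\<exists>x. x \<noteq> 0 \<and> x \<in> X \<and> x \<in> Y)"
  unfolding meets_def is_point_def
  using assms mem_span1_self span1_least by (metis subset_iff)

lemma distant_inter_zero: "distant X Y \<Longrightarrow> x \<in> X \<Longrightarrow> x \<in> Y \<Longrightarrow> x = 0"
  unfolding distant_def by auto

lemma distant_decompose: "distant X Y \<Longrightarrow> \<exists>a b. a \<in> X \<and> b \<in> Y \<and> v = a + b"
  unfolding distant_def mem_sumset_iff[symmetric] by simp

lemma sumset_span1_least:
  "lsubspace sm L \<Longrightarrow> u \<in> L \<Longrightarrow> v \<in> L \<Longrightarrow> sumset (span1 sm u) (span1 sm v) \<subseteq> L"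
  by (auto simp: mem_sumset_span1_iff intro!: lsubspace_add lsubspace_smult)

lemma sumset_span1_exchange:
  assumes "x \<in> sumset (span1 sm u) (span1 sm v)" "x \<notin> span1 sm u"
  shows "sumset (span1 sm u) (span1 sm v) = sumset (span1 sm u) (span1 sm x)"
proof -
  obtain a b where x: "x = sm a u + sm b v"
    using assms(1) mem_sumset_span1_iff by blast
  have "b \<noteq> 0"
    using assms(2) x mem_span1_iff by fastforce
  then have "v = sm (inverse b) x - sm (inverse b * a) u"
    by (simp add: x smult_add_right smult_assoc)
  then have "v \<in> sumset (span1 sm u) (span1 sm x)"
    using lsubspace_line lsubspace_diff lsubspace_smult
    by (metis mem_sumset_span1_left mem_sumset_span1_right)
  then show ?thesis
    using assms(1) by (intro subset_antisym sumset_span1_least lsubspace_line) simp_all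
qed

lemma line_eq_sumset_span1:
  assumes "is_line sm L" "x \<in> L" "y \<in> L" "x \<noteq> 0" "y \<notin> span1 sm x"
  shows "L = sumset (span1 sm x) (span1 sm y)"
proof -
  obtain u t where L: "L = sumset (span1 sm u) (span1 sm t)"
    using assms(1) unfolding is_line_def by blast
  have "\<exists>s. L = sumset (span1 sm x) (span1 sm s)"
  proof (cases "x \<in> span1 sm u")
    case True
    then show ?thesis using L assms(4) span1_eq_of_mem by metis
  next
    case False
    then have "L = sumset (span1 sm u) (span1 sm x)"
      using L assms(2) sumset_span1_exchange by blast
    then show ?thesis using sumset_commute by metis
  qed
  then show ?thesis using assms(3,5) sumset_span1_exchange by metis
qed

lemma quot_dim1_sumset_decompose:
  assumes q: "quot_dim1 sm (sumset X Y) X" and X: "lsubspace sm X"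
    and f: "f \<in> Y" "f \<notin> X" and y: "y \<in> Y"
  shows "\<exists>c. y - sm c f \<in> X"
proof -
  obtain u where u: "sumset X Y = sumset X (span1 sm u)"
    using q unfolding quot_dim1_def by blast
  have split: "\<exists>x a. x \<in> X \<and> z = x + sm a u" if "z \<in> Y" for z
  proof -
    have "z \<in> sumset X Y"
      using mem_sumsetI[OF lsubspace_zero[OF X] that] by simp
    then show ?thesis unfolding u mem_sumset_iff mem_span1_iff by blast
  qed
  obtain x a where x: "x \<in> X" "y = x + sm a u" using split[OF y] by blast
  obtain x' a' where x': "x' \<in> X" "f = x' + sm a' u" using split[OF f(1)] by blast
  have "a' \<noteq> 0" using f(2) x' by auto
  then have "y - sm (a * inverse a') f = x - sm (a * inverse a') x'"
    by (simp add: x x' smult_add_right smult_assoc[symmetric] mult.assoc)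
  then show ?thesis using x(1) x'(1) X lsubspace_diff lsubspace_smult by metis
qed

lemma adjacent_not_subset:
  assumes "adjacent sm X Y" "lsubspace sm Y"
  obtains x where "x \<in> X" "x \<notin> Y"
proof -
  obtain v where "v \<in> sumset X Y" "v \<notin> Y"
    using assms(1) unfolding adjacent_def quot_dim1_def by blast
  then obtain x y where "x \<in> X" "y \<in> Y" "v = x + y" "v \<notin> Y"
    unfolding mem_sumset_iff by blast
  then show ?thesis using that assms(2) lsubspace_add by blast
qed

lemma adjacent_inter_complement_nonzero:
  assumes W: "lsubspace sm W" and E0: "lsubspace sm E0" and E: "lsubspace sm E"
    and adj: "adjacent sm W E0" and d: "distant E0 E" and nd: "\<not> distant W E"
  shows "\<exists>x. x \<noteq> 0 \<and> x \<in> E \<and> x \<in> W"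
proof (rule ccontr)
  assume no_common: "\<not> ?thesis"
  obtain w where w: "w \<in> W" "w \<notin> E0" using adjacent_not_subset[OF adj E0] .
  have "v \<in> sumset W E" for v
  proof -
    obtain e0 e where e: "e0 \<in> E0" "e \<in> E" "v = e0 + e" using distant_decompose[OF d] by blast
    obtain f0 f where f: "f0 \<in> E0" "f \<in> E" "w = f0 + f" using distant_decompose[OF d] by blast
    have "f0 \<notin> W"
    proof
      assume "f0 \<in> W"
      then have "f \<in> W" using lsubspace_diff[OF W w(1)] f(3) by (metis add_diff_cancel_left')
      then show False using no_common f w by auto
    qed
    moreover have "quot_dim1 sm (sumset W E0) W" using adj unfolding adjacent_def by blast
    ultimately obtain c where c: "e0 - sm c f0 \<in> W"
      using quot_dim1_sumset_decompose W e(1) f(1) by blast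
    have "v = (e0 - sm c f0 + sm c w) + (e - sm c f)"
      using e f by (simp add: smult_add_right algebra_simps)
    moreover have "e0 - sm c f0 + sm c w \<in> W" using lsubspace_add lsubspace_smult W c w(1) by blast
    moreover have "e - sm c f \<in> E" using lsubspace_diff lsubspace_smult E e(2) f(2) by blast
    ultimately show ?thesis by (simp add: mem_sumsetI)
  qed
  moreover have "W \<inter> E = {0}" using no_common lsubspace_zero[OF W] lsubspace_zero[OF E] by blast
  ultimately show False using nd unfolding distant_def by blast
qed

lemma adjacent_inter_complement_eq_span1:
  assumes W: "lsubspace sm W" and E0: "lsubspace sm E0" and E: "lsubspace sm E"
    and adj: "adjacent sm W E0" and d: "distant E0 E" and nd: "\<not> distant W E"
    and w: "w \<in> W" "w \<notin> E0"
  obtains e where "e \<noteq> 0" "e \<in> E" "e - w \<in> E0" "E \<inter> W = span1 sm e"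
proof -
  have "quot_dim1 sm (sumset E0 W) E0"
    using adj sumset_commute unfolding adjacent_def by metis
  then have mod_w: "\<exists>a. x - sm a w \<in> E0" if "x \<in> W" for x
    using quot_dim1_sumset_decompose E0 w that by blast
  obtain x where x: "x \<noteq> 0" "x \<in> E" "x \<in> W"
    using adjacent_inter_complement_nonzero[OF W E0 E adj d nd] by blast
  obtain a where a: "x - sm a w \<in> E0" using mod_w x(3) by blast
  have "a \<noteq> 0" using a x distant_inter_zero[OF d] by fastforce
  define e where "e = sm (inverse a) x"
  have "e - w = sm (inverse a) (x - sm a w)"
    using \<open>a \<noteq> 0\<close> by (simp add: e_def smult_diff_right)
  then have eE0: "e - w \<in> E0" using lsubspace_smult[OF E0 a] by simp
  have eEW: "e \<in> E" "e \<in> W" unfolding e_def using lsubspace_smult E W x by auto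
  have "E \<inter> W \<subseteq> span1 sm e"
  proof
    fix y assume y: "y \<in> E \<inter> W"
    then obtain b where b: "y - sm b w \<in> E0" using mod_w by blast
    have "y - sm b e = (y - sm b w) - sm b (e - w)" by (simp add: smult_diff_right)
    then have "y - sm b e \<in> E0" using lsubspace_diff lsubspace_smult E0 b eE0 by metis
    moreover have "y - sm b e \<in> E" using y lsubspace_diff lsubspace_smult E eEW(1) by blast
    ultimately have "y = sm b e" using distant_inter_zero[OF d] by fastforce
    then show "y \<in> span1 sm e" using mem_span1_iff by blast
  qed
  moreover have "span1 sm e \<subseteq> E \<inter> W"
    using eEW lsubspace_smult E W by (auto simp: mem_span1_iff)
  moreover have "e \<noteq> 0" using eE0 w(2) lsubspace_minus[OF E0] by fastforce
  ultimately show ?thesis using that eEW eE0 by blast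
qed

lemma lsubspace_is_line: "is_line sm L \<Longrightarrow> lsubspace sm L"
  unfolding is_line_def using lsubspace_line by blast

lemma sumset_span1_meets:
  assumes "lsubspace sm X" "u - v \<in> X" "u \<noteq> v"
  shows "meets sm (sumset (span1 sm u) (span1 sm v)) X"
proof -
  have "u - v \<in> sumset (span1 sm u) (span1 sm v)"
    by (simp add: lsubspace_diff[OF lsubspace_line])
  moreover have "u - v \<noteq> 0" using assms(3) by simp
  ultimately show ?thesis using assms(2) meets_iff[OF lsubspace_line assms(1)] by blast
qed

lemma line_through_transversal_eq:
  assumes E0: "lsubspace sm E0" and E2: "lsubspace sm E2" and d: "distant E0 E2"
    and e1: "e1 \<notin> E0" and e2: "e2 \<in> E2" "e2 \<notin> span1 sm e1" and e12: "e1 - e2 \<in> E0"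
    and L: "is_line sm L" "e1 \<in> L" "meets sm L E0" "meets sm L E2"
  shows "L = sumset (span1 sm e1) (span1 sm e2)"
proof -
  have SL: "lsubspace sm L" using lsubspace_is_line[OF L(1)] .
  have "e1 \<noteq> 0" using e1 lsubspace_zero[OF E0] by blast
  obtain x0 where x0: "x0 \<noteq> 0" "x0 \<in> L" "x0 \<in> E0" using L(3) meets_iff[OF SL E0] by blast
  obtain x2 where x2: "x2 \<noteq> 0" "x2 \<in> L" "x2 \<in> E2" using L(4) meets_iff[OF SL E2] by blast
  have "x0 \<notin> span1 sm e1"
  proof
    assume "x0 \<in> span1 sm e1"
    then obtain c where c: "x0 = sm c e1" using mem_span1_iff by blast
    then have "c \<noteq> 0" using x0(1) by auto
    then show False using c x0(3) e1 lsubspace_smult_cancel[OF E0] by blast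
  qed
  then have L0: "L = sumset (span1 sm e1) (span1 sm x0)"
    using line_eq_sumset_span1 L(1,2) x0(2) \<open>e1 \<noteq> 0\<close> by blast
  then obtain a b where ab: "x2 = sm a e1 + sm b x0"
    using x2(2) mem_sumset_span1_iff by blast
  have "a \<noteq> 0"
    using ab x2 x0(3) lsubspace_smult[OF E0] distant_inter_zero[OF d] by fastforce
  have "sm a e2 - x2 = - (sm a (e1 - e2) + sm b x0)"
    by (simp add: ab smult_diff_right)
  then have "sm a e2 - x2 \<in> E0"
    using E0 e12 x0(3) lsubspace_minus lsubspace_add lsubspace_smult by metis
  moreover have "sm a e2 - x2 \<in> E2" using E2 e2(1) x2(3) lsubspace_diff lsubspace_smult by blast
  ultimately have "sm a e2 = x2" using distant_inter_zero[OF d] by fastforce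
  then have "e2 \<in> L" using lsubspace_smult_cancel[OF SL \<open>a \<noteq> 0\<close>] x2(2) by simp
  then show ?thesis using line_eq_sumset_span1 L(1,2) \<open>e1 \<noteq> 0\<close> e2(2) by blast
qed

end

theorem lemma4p9:
  fixes sm :: "'k::division_ring \<Rightarrow> 'v::ab_group_add \<Rightarrow> 'v"
    and E0 E1 E2 W :: "'v set"
  assumes "lvs sm" and "dim_gt2 sm"
    and "inG sm E0" and "inG sm E1" and "inG sm E2" and "inG sm W"
    and "distant E0 E1" and "distant E0 E2" and "distant E1 E2"
    and "adjacent sm W E0" and "\<not> distant W E1" and "\<not> distant W E2"
  shows "is_point sm (E1 \<inter> W) \<and> is_point sm (E2 \<inter> W)
    \<and> is_line sm (sumset (E1 \<inter> W) (E2 \<inter> W))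
    \<and> meets sm (sumset (E1 \<inter> W) (E2 \<inter> W)) E0
    \<and> (\<forall>L'. is_line sm L' \<and> E1 \<inter> W \<subseteq> L' \<and> meets sm L' E0 \<and> meets sm L' E2
            \<longrightarrow> L' = sumset (E1 \<inter> W) (E2 \<inter> W))"
proof -
  interpret left_vector_space sm using assms(1) by unfold_locales
  have S0: "lsubspace sm E0" and S1: "lsubspace sm E1" and S2: "lsubspace sm E2"
    and SW: "lsubspace sm W" using assms(3-6) unfolding inG_def by auto
  obtain w where w: "w \<in> W" "w \<notin> E0" using adjacent_not_subset[OF assms(10) S0] .
  obtain e1 where e1: "e1 \<noteq> 0" "e1 \<in> E1" "e1 - w \<in> E0" "E1 \<inter> W = span1 sm e1"
    using adjacent_inter_complement_eq_span1[OF SW S0 S1 assms(10,7,11) w] .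
  obtain e2 where e2: "e2 \<noteq> 0" "e2 \<in> E2" "e2 - w \<in> E0" "E2 \<inter> W = span1 sm e2"
    using adjacent_inter_complement_eq_span1[OF SW S0 S2 assms(10,8,12) w] .
  have "e1 - e2 \<in> E0" using lsubspace_diff[OF S0 e1(3) e2(3)] by simp
  have "e1 \<notin> E0" using e1 distant_inter_zero[OF assms(7)] by blast
  have indep: "e2 \<notin> span1 sm e1"
    using e1 e2 distant_inter_zero[OF assms(9)] lsubspace_smult[OF S1] by (auto simp: mem_span1_iff)
  then have "e1 \<noteq> e2" by auto
  have "is_point sm (span1 sm e1)" "is_point sm (span1 sm e2)"
    unfolding is_point_def using e1(1) e2(1) by blast+
  moreover have "is_line sm (sumset (span1 sm e1) (span1 sm e2))"
    unfolding is_line_def using e1(1) indep by blast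
  moreover have "meets sm (sumset (span1 sm e1) (span1 sm e2)) E0"
    using sumset_span1_meets[OF S0 \<open>e1 - e2 \<in> E0\<close> \<open>e1 \<noteq> e2\<close>] .
  moreover have "L' = sumset (span1 sm e1) (span1 sm e2)"
    if "is_line sm L'" "span1 sm e1 \<subseteq> L'" "meets sm L' E0" "meets sm L' E2" for L'
    using line_through_transversal_eq[OF S0 S2 assms(8) \<open>e1 \<notin> E0\<close> e2(2) indep
        \<open>e1 - e2 \<in> E0\<close>] that mem_span1_self by blast
  ultimately show ?thesis unfolding e1(4) e2(4) by blast
qed

end
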